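(* Let $(P,\le,A_1\ldots A_k)$ be a regular poset with node tree $(\mathcal{N},\prec)$, and suppose $M$ is a descendant of $N$ in $(\mathcal{N},\prec)$. Then (1) $\mathrm{width}(M)\le\mathrm{width}(N)$; (2) if $\mathrm{width}(M)=\mathrm{width}(N)$, then $\mathrm{surplus}(M)\le\mathrm{surplus}(N)$.
   Context: Let $(P,\le)$ be a finite poset of width $w$. For $A\subseteq P$ let $A{\uparrow}=\{y: x\le y\text{ for some }x\in A\}$, $A{\downarrow}=\{y: y\le x\text{ for some }x\in A\}$. For maximal antichains $A,B$ write $A\sqsubseteq B$ if $A\subseteq B{\downarrow}$, and $A\sqsubset B$ if also $A\ne B$. For disjoint antichains $A\sqsubset B$, $(A,B,<)$ is the bipartite graph with classes $A,B$ and edges $(a<b)$ for $a\in A,b\in B$, $a<b$; it is regular if every edge lies in a perfect matching. A regular poset $(P,\le,A_1\ldots A_k)$: $A_1,\dots,A_k$ are maximum antichains partitioning $P$, $(\{A_1,\dots,A_k\},\sqsubseteq)$ is a linear order with minimum $A_1$ and maximum $A_2$, $a<b$ for all $a\in A_1,b\in A_2$, and for every $t\in[2,k]$ and every $A_p\sqsubset A_s$ consecutive in $(\{A_1,\dots,A_t\},\sqsubseteq)$ the graph $(A_p,A_s,<)$ is regular. A node is a bipartite graph $(X,Y,<)$ where, for some such consecutive pair $A_p\sqsubset A_s$ (at some stage $t$), $X\subseteq A_p$, $Y\subseteq A_s$ and $X\cup Y$ is the vertex set of a connected component of $(A_p,A_s,<)$. Its width is $\mathrm{width}(N)=|X|=|Y|$;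 $\mathrm{Int}(N)=X{\uparrow}\cap Y{\downarrow}$; its surplus $\mathrm{surplus}(N)$ is the largest $k$ such that $|A{\uparrow}\cap Y|\ge\min\{|A|+k,|Y|\}$ for all non-empty $A\subseteq X$, with $\mathrm{surplus}(N)=\infty$ if $N$ is a complete bipartite graph. Node tree $(\mathcal{N},\prec)$: $\mathcal{N}$ is the set of all nodes; when for $t\ge3$ the antichain $A_t$ is inserted between $A_p\sqsubset A_s$ consecutive at stage $t-1$, each node $M$ of $(A_p,A_t,<)$ or $(A_t,A_s,<)$ is declared a child of the unique node $N$ of $(A_p,A_s,<)$ with $\mathrm{Int}(M)\subset\mathrm{Int}(N)$. This gives a rooted tree with root $(A_1,A_2,<)$; descendants are defined via the child relation. *)

theory Defs
  imports Main "HOL-Library.Extended_Real"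
begin

text \<open>Finite posets are subsets P of a type with a partial order; the order on P is the
induced one. Antichains are indexed A 1, ..., A k.\<close>

definition up_set :: "'a::order set \<Rightarrow> 'a set \<Rightarrow> 'a set" where
  "up_set P A = {y \<in> P. \<exists>x\<in>A. x \<le> y}"

definition down_set :: "'a::order set \<Rightarrow> 'a set \<Rightarrow> 'a set" where
  "down_set P A = {y \<in> P. \<exists>x\<in>A. y \<le> x}"

definition antichain :: "'a::order set \<Rightarrow> 'a set \<Rightarrow> bool" where
  "antichain P A \<longleftrightarrow> A \<subseteq> P \<and> (\<forall>x\<in>A. \<forall>y\<in>A. x \<le> y \<longrightarrow> x = y)"

definition maximum_antichain :: "'a::order set \<Rightarrow> 'a set \<Rightarrow> bool" where
  "maximum_antichain P A \<longleftrightarrow> antichain P A \<and> (\<forall>B. antichain P B \<longrightarrow> card B \<le> card A)"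

definition ac_le :: "'a::order set \<Rightarrow> 'a set \<Rightarrow> 'a set \<Rightarrow> bool" where
  "ac_le P A B \<longleftrightarrow> A \<subseteq> down_set P B"

definition ac_less :: "'a::order set \<Rightarrow> 'a set \<Rightarrow> 'a set \<Rightarrow> bool" where
  "ac_less P A B \<longleftrightarrow> ac_le P A B \<and> A \<noteq> B"

definition consecutive :: "'a::order set \<Rightarrow> (nat \<Rightarrow> 'a set) \<Rightarrow> nat \<Rightarrow> nat \<Rightarrow> nat \<Rightarrow> bool" where
  "consecutive P A t p s \<longleftrightarrow> p \<in> {1..t} \<and> s \<in> {1..t} \<and> ac_less P (A p) (A s) \<and>
     \<not> (\<exists>q\<in>{1..t}. ac_less P (A p) (A q) \<and> ac_less P (A q) (A s))"

definition regular_bip :: "'a::order set \<Rightarrow> 'a set \<Rightarrow> bool" where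
  "regular_bip A B \<longleftrightarrow> (\<forall>a\<in>A. \<forall>b\<in>B. a < b \<longrightarrow>
     (\<exists>f. bij_betw f A B \<and> (\<forall>x\<in>A. x < f x) \<and> f a = b))"

definition regular_poset :: "'a::order set \<Rightarrow> (nat \<Rightarrow> 'a set) \<Rightarrow> nat \<Rightarrow> bool" where
  "regular_poset P A k \<longleftrightarrow>
     2 \<le> k \<and>
     (\<forall>i\<in>{1..k}. maximum_antichain P (A i)) \<and>
     (\<forall>i\<in>{1..k}. A i \<noteq> {}) \<and>
     (\<forall>i\<in>{1..k}. \<forall>j\<in>{1..k}. i \<noteq> j \<longrightarrow> A i \<inter> A j = {}) \<and>
     (\<Union>i\<in>{1..k}. A i) = P \<and>
     (\<forall>i\<in>{1..k}. \<forall>j\<in>{1..k}. ac_le P (A i) (A j) \<or> ac_le P (A j) (A i)) \<and>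
     (\<forall>i\<in>{1..k}. ac_le P (A 1) (A i) \<and> ac_le P (A i) (A 2)) \<and>
     (\<forall>a\<in>A 1. \<forall>b\<in>A 2. a < b) \<and>
     (\<forall>t\<in>{2..k}. \<forall>p s. consecutive P A t p s \<longrightarrow> regular_bip (A p) (A s))"

definition bip_adj :: "'a::order set \<Rightarrow> 'a set \<Rightarrow> 'a \<Rightarrow> 'a \<Rightarrow> bool" where
  "bip_adj A B u v \<longleftrightarrow> (u \<in> A \<and> v \<in> B \<and> u < v) \<or> (v \<in> A \<and> u \<in> B \<and> v < u)"

definition is_component :: "'a::order set \<Rightarrow> 'a set \<Rightarrow> 'a set \<Rightarrow> bool" where
  "is_component A B C \<longleftrightarrow> (\<exists>u\<in>A \<union> B. C = {v. (bip_adj A B)\<^sup>*\<^sup>* u v})"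

definition node_of :: "'a::order set \<Rightarrow> 'a set \<Rightarrow> 'a set \<times> 'a set \<Rightarrow> bool" where
  "node_of A B N \<longleftrightarrow> fst N \<subseteq> A \<and> snd N \<subseteq> B \<and> is_component A B (fst N \<union> snd N)"

definition is_node :: "'a::order set \<Rightarrow> (nat \<Rightarrow> 'a set) \<Rightarrow> nat \<Rightarrow> 'a set \<times> 'a set \<Rightarrow> bool" where
  "is_node P A k N \<longleftrightarrow> (\<exists>t\<in>{2..k}. \<exists>p s. consecutive P A t p s \<and> node_of (A p) (A s) N)"

definition node_width :: "'a set \<times> 'a set \<Rightarrow> nat" where
  "node_width N = card (fst N)"

definition node_int :: "'a::order set \<Rightarrow> 'a set \<times> 'a set \<Rightarrow> 'a set" where
  "node_int P N = up_set P (fst N) \<inter> down_set P (snd N)"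

definition surplus_cond :: "'a::order set \<Rightarrow> 'a set \<times> 'a set \<Rightarrow> int \<Rightarrow> bool" where
  "surplus_cond P N k \<longleftrightarrow> (\<forall>S. S \<subseteq> fst N \<and> S \<noteq> {} \<longrightarrow>
     int (card (up_set P S \<inter> snd N)) \<ge> min (int (card S) + k) (int (card (snd N))))"

definition surplus :: "'a::order set \<Rightarrow> 'a set \<times> 'a set \<Rightarrow> ereal" where
  "surplus P N = (if (\<forall>x\<in>fst N. \<forall>y\<in>snd N. x < y) then \<infinity>
                  else ereal (of_int (GREATEST k. surplus_cond P N k)))"

text \<open>Child relation of the node tree: when A_t (t \<ge> 3) is inserted between A_p \<sqsubset> A_s
consecutive at stage t-1, each node M of (A_p,A_t,<) or (A_t,A_s,<) is a child of the node N
of (A_p,A_s,<) with Int(M) \<subset> Int(N).\<close>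
definition node_child :: "'a::order set \<Rightarrow> (nat \<Rightarrow> 'a set) \<Rightarrow> nat \<Rightarrow>
    'a set \<times> 'a set \<Rightarrow> 'a set \<times> 'a set \<Rightarrow> bool" where
  "node_child P A k M N \<longleftrightarrow> (\<exists>t\<in>{3..k}. \<exists>p s. consecutive P A (t - 1) p s \<and>
     ac_less P (A p) (A t) \<and> ac_less P (A t) (A s) \<and>
     (node_of (A p) (A t) M \<or> node_of (A t) (A s) M) \<and>
     node_of (A p) (A s) N \<and> node_int P M \<subset> node_int P N)"

definition node_descendant :: "'a::order set \<Rightarrow> (nat \<Rightarrow> 'a set) \<Rightarrow> nat \<Rightarrow>
    'a set \<times> 'a set \<Rightarrow> 'a set \<times> 'a set \<Rightarrow> bool" where
  "node_descendant P A k M N \<longleftrightarrow> (node_child P A k)\<^sup>+\<^sup>+ M N"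

end

theory Submission
  imports Defs
begin

text \<open>A child \<open>M\<close> of \<open>N\<close> arises when \<open>A\<^sub>t\<close> is inserted between consecutive antichains
\<open>A\<^sub>p \<sqsubset> A\<^sub>s\<close>, and regularity at stage \<open>t\<close> provides perfect matchings
\<open>f : A\<^sub>p \<rightarrow> A\<^sub>t\<close> and \<open>h : A\<^sub>t \<rightarrow> A\<^sub>s\<close> along \<open><\<close>.
Because \<open>Int(M) \<subseteq> Int(N)\<close> and the \<open>A\<^sub>i\<close> are antichains, the side of \<open>M\<close> lying in
\<open>A\<^sub>p\<close> (resp. \<open>A\<^sub>s\<close>) is contained in the corresponding side of \<open>N\<close>; as both nodes are
perfectly matched, \<open>width(M) \<le> width(N)\<close>. If the widths agree these sides coincide, and
\<open>h\<close> (resp. \<open>f\<close>) maps neighbourhoods in \<open>M\<close> injectively into neighbourhoods in \<open>N\<close>, so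
every surplus bound of \<open>M\<close> also holds for \<open>N\<close>. The resulting comparison of
(width, surplus) is transitive, which extends the result from children to descendants.\<close>

lemma component_closed:
  assumes "is_component A B C" "x \<in> C" "bip_adj A B x y"
  shows "y \<in> C"
  using assms unfolding is_component_def
  by (auto intro: rtranclp.rtrancl_into_rtrancl)

lemma node_of_neighbour_in_snd:
  assumes "node_of A B N" "A \<inter> B = {}" "x \<in> fst N" "y \<in> B" "x < y"
  shows "y \<in> snd N"
proof -
  have "bip_adj A B x y"
    using assms(1,3-5) unfolding node_of_def bip_adj_def by auto
  then have "y \<in> fst N \<union> snd N"
    using assms(1,3) component_closed unfolding node_of_def by blast
  then show ?thesis using assms(1,2,4) unfolding node_of_def by auto
qed

lemma node_of_neighbour_in_fst:
  assumes "node_of A B N" "A \<inter> B = {}" "y \<in> snd N" "x \<in> A" "x < y"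
  shows "x \<in> fst N"
proof -
  have "bip_adj A B y x"
    using assms(1,3-5) unfolding node_of_def bip_adj_def by auto
  then have "x \<in> fst N \<union> snd N"
    using assms(1,3) component_closed unfolding node_of_def by blast
  then show ?thesis using assms(1,2,4) unfolding node_of_def by auto
qed

lemma node_of_matching_image:
  assumes "node_of A B N" "A \<inter> B = {}" "bij_betw f A B" "\<forall>x\<in>A. x < f x"
  shows "f ` fst N = snd N"
proof
  have sides: "fst N \<subseteq> A" "snd N \<subseteq> B" using assms(1) unfolding node_of_def by auto
  show "f ` fst N \<subseteq> snd N"
  proof
    fix y assume "y \<in> f ` fst N"
    then obtain x where "x \<in> fst N" "y = f x" by blast
    moreover have "f x \<in> B" "x < f x"
      using \<open>x \<in> fst N\<close> sides bij_betw_apply[OF assms(3)] assms(4) by auto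
    ultimately show "y \<in> snd N" using node_of_neighbour_in_snd[OF assms(1,2)] by blast
  qed
  show "snd N \<subseteq> f ` fst N"
  proof
    fix y assume y: "y \<in> snd N"
    then have "y \<in> f ` A" using sides assms(3) bij_betw_imp_surj_on by blast
    then obtain x where "x \<in> A" "y = f x" by blast
    then have "x \<in> fst N" using y assms(4) node_of_neighbour_in_fst[OF assms(1,2)] by blast
    then show "y \<in> f ` fst N" using \<open>y = f x\<close> by blast
  qed
qed

lemma node_of_card_eq:
  assumes "node_of A B N" "A \<inter> B = {}" "bij_betw f A B" "\<forall>x\<in>A. x < f x"
  shows "card (snd N) = card (fst N)"
proof -
  have "inj_on f (fst N)"
    using assms(1,3) unfolding node_of_def bij_betw_def by (auto intro: inj_on_subset)
  then show ?thesis using node_of_matching_image[OF assms] card_image by metis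
qed

lemma regular_bip_perfect_matching:
  assumes "regular_bip X Y" "X \<noteq> {}" "X \<inter> Y = {}" "ac_le P X Y"
  shows "\<exists>f. bij_betw f X Y \<and> (\<forall>x\<in>X. x < f x)"
proof -
  obtain a b where "a \<in> X" "b \<in> Y" "a \<le> b"
    using assms(2,4) unfolding ac_le_def down_set_def by blast
  moreover have "a \<noteq> b" using calculation assms(3) by auto
  ultimately show ?thesis using assms(1) unfolding regular_bip_def by force
qed

lemma ac_le_trans: "ac_le P X Y \<Longrightarrow> ac_le P Y Z \<Longrightarrow> ac_le P X Z"
  unfolding ac_le_def down_set_def by (blast intro: order_trans)

lemma ac_le_subset:
  assumes "antichain P X" "ac_le P X Y" "ac_le P Y X"
  shows "X \<subseteq> Y"
proof
  fix x assume x: "x \<in> X"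
  then obtain y where y: "y \<in> Y" "x \<le> y" using assms(2) unfolding ac_le_def down_set_def by auto
  then obtain x' where "x' \<in> X" "y \<le> x'" using assms(3) unfolding ac_le_def down_set_def by auto
  then have "x = y" using assms(1) x y unfolding antichain_def by (metis order_trans order_antisym)
  then show "x \<in> Y" using y by simp
qed

lemma ac_le_antisym:
  "antichain P X \<Longrightarrow> antichain P Y \<Longrightarrow> ac_le P X Y \<Longrightarrow> ac_le P Y X \<Longrightarrow> X = Y"
  by (simp add: ac_le_subset subset_antisym)

lemma consecutive_insert_left:
  assumes cons: "consecutive P A t p s"
    and new: "ac_less P (A p) (A (Suc t))" "ac_less P (A (Suc t)) (A s)"
    and antichains: "antichain P (A (Suc t))" "antichain P (A s)"
  shows "consecutive P A (Suc t) p (Suc t)"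
proof -
  have "\<not> (ac_less P (A p) (A q) \<and> ac_less P (A q) (A (Suc t)))" if "q \<in> {1..Suc t}" for q
  proof
    assume q: "ac_less P (A p) (A q) \<and> ac_less P (A q) (A (Suc t))"
    then have "q \<noteq> Suc t" unfolding ac_less_def by blast
    then have "q \<in> {1..t}" using that by auto
    moreover have "ac_le P (A q) (A s)"
      using q new(2) ac_le_trans[of P "A q" "A (Suc t)" "A s"] unfolding ac_less_def by blast
    moreover have "A q \<noteq> A s"
    proof
      assume "A q = A s"
      then have "A (Suc t) = A s"
        using q new(2) ac_le_antisym[OF antichains] unfolding ac_less_def by simp
      then show False using new(2) unfolding ac_less_def by simp
    qed
    ultimately show False using q cons unfolding consecutive_def ac_less_def by blast
  qed
  then show ?thesis using cons new(1) unfolding consecutive_def by simp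
qed

lemma consecutive_insert_right:
  assumes cons: "consecutive P A t p s"
    and new: "ac_less P (A p) (A (Suc t))" "ac_less P (A (Suc t)) (A s)"
    and antichains: "antichain P (A p)" "antichain P (A (Suc t))"
  shows "consecutive P A (Suc t) (Suc t) s"
proof -
  have "\<not> (ac_less P (A (Suc t)) (A q) \<and> ac_less P (A q) (A s))" if "q \<in> {1..Suc t}" for q
  proof
    assume q: "ac_less P (A (Suc t)) (A q) \<and> ac_less P (A q) (A s)"
    then have "q \<noteq> Suc t" unfolding ac_less_def by blast
    then have "q \<in> {1..t}" using that by auto
    moreover have "ac_le P (A p) (A q)"
      using q new(1) ac_le_trans[of P "A p" "A (Suc t)" "A q"] unfolding ac_less_def by blast
    moreover have "A p \<noteq> A q"
    proof
      assume "A p = A q"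
      then have "A p = A (Suc t)"
        using q new(1) ac_le_antisym[OF antichains] unfolding ac_less_def by simp
      then show False using new(1) unfolding ac_less_def by simp
    qed
    ultimately show False using q cons unfolding consecutive_def ac_less_def by blast
  qed
  then show ?thesis using cons new(2) unfolding consecutive_def by simp
qed

lemma ex_greatest_int:
  fixes Q :: "int \<Rightarrow> bool"
  assumes "Q a" "\<And>k. Q k \<Longrightarrow> k \<le> b"
  obtains m where "Q m" "\<And>k. Q k \<Longrightarrow> k \<le> m"
proof -
  let ?F = "{k. Q k \<and> a \<le> k}"
  have "finite ?F" by (rule finite_subset[of _ "{a..b}"]) (use assms(2) in auto)
  moreover have "a \<in> ?F" using assms(1) by simp
  ultimately have "Max ?F \<in> ?F" "\<And>k. k \<in> ?F \<Longrightarrow> k \<le> Max ?F"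
    using Max_in Max_ge by blast+
  then show ?thesis by (intro that) force+
qed

lemma surplus_cond_complete:
  assumes "\<forall>x\<in>fst N. \<forall>y\<in>snd N. x < y" "snd N \<subseteq> P"
  shows "surplus_cond P N k"
  unfolding surplus_cond_def
proof (intro allI impI)
  fix S assume S: "S \<subseteq> fst N \<and> S \<noteq> {}"
  then obtain a where "a \<in> fst N" "a \<in> S" by blast
  then have "\<forall>y\<in>snd N. a \<le> y" using assms(1) less_imp_le by blast
  then have "up_set P S \<inter> snd N = snd N"
    using \<open>a \<in> S\<close> assms(2) unfolding up_set_def by blast
  then show "min (int (card S) + k) (int (card (snd N))) \<le> int (card (up_set P S \<inter> snd N))"
    by simp
qed

lemma surplus_cond_lower:
  assumes "finite (fst N)"
  shows "surplus_cond P N (- int (card (fst N)))"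
  unfolding surplus_cond_def
proof (intro allI impI)
  fix S assume "S \<subseteq> fst N \<and> S \<noteq> {}"
  then have "card S \<le> card (fst N)" using assms card_mono by blast
  then show "min (int (card S) + - int (card (fst N))) (int (card (snd N)))
      \<le> int (card (up_set P S \<inter> snd N))"
    by simp
qed

lemma surplus_cond_upper:
  assumes "surplus_cond P N k" "finite (snd N)"
    and "x \<in> fst N" "y \<in> snd N" "x \<noteq> y" "\<not> x < y"
  shows "k + 2 \<le> int (card (snd N))"
proof -
  have "\<not> x \<le> y" using assms(5,6) by (simp add: less_le)
  then have "up_set P {x} \<inter> snd N \<subset> snd N"
    using assms(4) unfolding up_set_def by blast
  then have "card (up_set P {x} \<inter> snd N) < card (snd N)"
    using assms(2) psubset_card_mono by blast
  moreover have "min (int (card {x}) + k) (int (card (snd N)))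
      \<le> int (card (up_set P {x} \<inter> snd N))"
    using assms(1,3) unfolding surplus_cond_def by blast
  ultimately show ?thesis by simp
qed

lemma surplus_mono:
  assumes "finite (fst M)" "snd M \<subseteq> P" "finite (snd N)" "fst N \<inter> snd N = {}"
    and transfer: "\<And>k. surplus_cond P M k \<Longrightarrow> surplus_cond P N k"
  shows "surplus P M \<le> surplus P N"
proof (cases "\<forall>x\<in>fst N. \<forall>y\<in>snd N. x < y")
  case True
  then show ?thesis by (simp add: surplus_def)
next
  case N_incomplete: False
  then obtain x y where "x \<in> fst N" "y \<in> snd N" "\<not> x < y" by blast
  moreover have "x \<noteq> y" using calculation assms(4) by blast
  ultimately have bounded: "\<And>k. surplus_cond P N k \<Longrightarrow> k \<le> int (card (snd N)) - 2"
    using surplus_cond_upper assms(3) by fastforce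
  have M_incomplete: "\<not> (\<forall>x\<in>fst M. \<forall>y\<in>snd M. x < y)"
  proof
    assume "\<forall>x\<in>fst M. \<forall>y\<in>snd M. x < y"
    then have "surplus_cond P N (int (card (snd N)))"
      using transfer surplus_cond_complete assms(2) by blast
    then show False using bounded by fastforce
  qed
  obtain m where m: "surplus_cond P M m" "\<And>k. surplus_cond P M k \<Longrightarrow> k \<le> m"
    using ex_greatest_int[of "surplus_cond P M", OF surplus_cond_lower[OF assms(1)]]
      bounded transfer by blast
  obtain n where n: "surplus_cond P N n" "\<And>k. surplus_cond P N k \<Longrightarrow> k \<le> n"
    using ex_greatest_int[of "surplus_cond P N", OF transfer[OF surplus_cond_lower[OF assms(1)]]
      bounded] by blast
  have "(GREATEST k. surplus_cond P M k) = m" by (rule Greatest_equality) (use m in auto)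
  moreover have "(GREATEST k. surplus_cond P N k) = n" by (rule Greatest_equality) (use n in auto)
  moreover have "m \<le> n" using n(2) transfer m(1) by blast
  ultimately show ?thesis using N_incomplete M_incomplete by (simp add: surplus_def)
qed

lemma node_int_subset_fst:
  assumes "antichain P X" "fst M \<subseteq> X" "fst N \<subseteq> X"
    and "fst M \<subseteq> down_set P (snd M)" "node_int P M \<subseteq> node_int P N"
  shows "fst M \<subseteq> fst N"
proof
  fix x assume x: "x \<in> fst M"
  then have "x \<in> node_int P M"
    using assms(4) unfolding node_int_def up_set_def down_set_def by auto
  then obtain x' where x': "x' \<in> fst N" "x' \<le> x"
    using assms(5) unfolding node_int_def up_set_def by auto
  then have "x' = x" using assms(1-3) x unfolding antichain_def by blast
  then show "x \<in> fst N" using x' by simp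
qed

lemma node_int_subset_snd:
  assumes "antichain P Y" "snd M \<subseteq> Y" "snd N \<subseteq> Y"
    and "snd M \<subseteq> up_set P (fst M)" "node_int P M \<subseteq> node_int P N"
  shows "snd M \<subseteq> snd N"
proof
  fix y assume y: "y \<in> snd M"
  then have "y \<in> node_int P M"
    using assms(4) unfolding node_int_def up_set_def down_set_def by auto
  then obtain y' where y': "y' \<in> snd N" "y \<le> y'"
    using assms(5) unfolding node_int_def down_set_def by auto
  then have "y = y'" using assms(1-3) y unfolding antichain_def by blast
  then show "y \<in> snd N" using y' by simp
qed

lemma surplus_cond_transfer_snd:
  assumes "surplus_cond P M k" "fst M = fst N"
    and "inj_on h (snd M)" "h ` snd M \<subseteq> snd N" "\<forall>y\<in>snd M. y \<le> h y"
    and "snd N \<subseteq> P" "finite (snd N)" "card (snd M) = card (snd N)"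
  shows "surplus_cond P N k"
  unfolding surplus_cond_def
proof (intro allI impI)
  fix S assume S: "S \<subseteq> fst N \<and> S \<noteq> {}"
  have "inj_on h (up_set P S \<inter> snd M)" using assms(3) inj_on_subset by blast
  moreover have "h ` (up_set P S \<inter> snd M) \<subseteq> up_set P S \<inter> snd N"
  proof
    fix z assume "z \<in> h ` (up_set P S \<inter> snd M)"
    then obtain y where y: "y \<in> up_set P S" "y \<in> snd M" "z = h y" by blast
    then obtain x where x: "x \<in> S" "x \<le> y" unfolding up_set_def by blast
    have "y \<le> h y" "h y \<in> snd N" using y(2) assms(4,5) by auto
    then have "x \<le> z" "z \<in> snd N" "z \<in> P" using x(2) y(3) assms(6) order_trans by blast+
    then show "z \<in> up_set P S \<inter> snd N" using x(1) unfolding up_set_def by blast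
  qed
  moreover have "finite (up_set P S \<inter> snd N)" using assms(7) by simp
  ultimately have "card (up_set P S \<inter> snd M) \<le> card (up_set P S \<inter> snd N)"
    by (rule card_inj_on_le)
  moreover have "min (int (card S) + k) (int (card (snd M))) \<le> int (card (up_set P S \<inter> snd M))"
    using assms(1,2) S unfolding surplus_cond_def by simp
  ultimately show "min (int (card S) + k) (int (card (snd N))) \<le> int (card (up_set P S \<inter> snd N))"
    using assms(8) by linarith
qed

lemma surplus_cond_transfer_fst:
  assumes "surplus_cond P M k" "snd M = snd N"
    and "inj_on f (fst N)" "f ` fst N \<subseteq> fst M" "\<forall>x\<in>fst N. x \<le> f x"
    and "finite (snd N)"
  shows "surplus_cond P N k"
  unfolding surplus_cond_def
proof (intro allI impI)
  fix S assume S: "S \<subseteq> fst N \<and> S \<noteq> {}"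
  then have "inj_on f S" using inj_on_subset[OF assms(3)] by blast
  then have "card (f ` S) = card S" by (rule card_image)
  moreover have "f ` S \<subseteq> fst M \<and> f ` S \<noteq> {}" using S assms(4) by blast
  then have "min (int (card (f ` S)) + k) (int (card (snd N)))
      \<le> int (card (up_set P (f ` S) \<inter> snd N))"
    using assms(1) unfolding surplus_cond_def assms(2)[symmetric] by blast
  moreover have "up_set P (f ` S) \<inter> snd N \<subseteq> up_set P S \<inter> snd N"
  proof
    fix y assume "y \<in> up_set P (f ` S) \<inter> snd N"
    then obtain x where x: "x \<in> S" "f x \<le> y" "y \<in> P" "y \<in> snd N"
      unfolding up_set_def by blast
    have "x \<le> f x" using x(1) S assms(5) by blast
    then have "x \<le> y" using x(2) by (rule order_trans)
    then show "y \<in> up_set P S \<inter> snd N" using x unfolding up_set_def by blast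
  qed
  then have "card (up_set P (f ` S) \<inter> snd N) \<le> card (up_set P S \<inter> snd N)"
    using assms(6) by (simp add: card_mono)
  ultimately show "min (int (card S) + k) (int (card (snd N))) \<le> int (card (up_set P S \<inter> snd N))"
    by linarith
qed

definition width_surplus_le ::
    "'a::order set \<Rightarrow> 'a set \<times> 'a set \<Rightarrow> 'a set \<times> 'a set \<Rightarrow> bool" where
  "width_surplus_le P M N \<longleftrightarrow> node_width M \<le> node_width N \<and>
     (node_width M = node_width N \<longrightarrow> surplus P M \<le> surplus P N)"

lemma width_surplus_le_trans:
  assumes "width_surplus_le P L M" "width_surplus_le P M N"
  shows "width_surplus_le P L N"
proof -
  have "node_width L \<le> node_width M" "node_width M \<le> node_width N"
    using assms unfolding width_surplus_le_def by blast+
  moreover have "surplus P L \<le> surplus P N"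
    if "node_width L = node_width N" "node_width L \<le> node_width M" "node_width M \<le> node_width N"
    using that assms unfolding width_surplus_le_def by (metis order.trans le_antisym)
  ultimately show ?thesis unfolding width_surplus_le_def by simp
qed

locale matched_layers =
  fixes P :: "'a::order set" and X Z Y :: "'a set" and f h :: "'a \<Rightarrow> 'a"
  assumes finite_P: "finite P"
    and antichain_X: "antichain P X" and antichain_Z: "antichain P Z"
    and antichain_Y: "antichain P Y"
    and disjoint_XZ: "X \<inter> Z = {}" and disjoint_ZY: "Z \<inter> Y = {}" and disjoint_XY: "X \<inter> Y = {}"
    and bij_f: "bij_betw f X Z" and f_above: "\<forall>x\<in>X. x < f x"
    and bij_h: "bij_betw h Z Y" and h_above: "\<forall>z\<in>Z. z < h z"
begin

lemma layers_subset: "X \<subseteq> P" "Z \<subseteq> P" "Y \<subseteq> P"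
  using antichain_X antichain_Z antichain_Y unfolding antichain_def by simp_all

lemma finite_layers: "finite X" "finite Z" "finite Y"
  using layers_subset finite_subset[OF _ finite_P] by blast+

lemma matched_chain:
  assumes "x \<in> X"
  shows "f x \<in> Z" "h (f x) \<in> Y" "x < f x" "f x < h (f x)" "x < h (f x)"
proof -
  show "f x \<in> Z" using bij_betw_apply[OF bij_f assms] .
  then show "h (f x) \<in> Y" using bij_betw_apply[OF bij_h] by blast
  show "x < f x" using f_above assms by blast
  moreover show "f x < h (f x)" using h_above \<open>f x \<in> Z\<close> by blast
  ultimately show "x < h (f x)" by (rule less_trans)
qed

lemma node_of_XY_card_eq:
  assumes "node_of X Y N"
  shows "card (snd N) = card (fst N)"
proof (rule node_of_card_eq[OF assms disjoint_XY])
  show "bij_betw (h \<circ> f) X Y" using bij_f bij_h by (rule bij_betw_trans)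
  show "\<forall>x\<in>X. x < (h \<circ> f) x" using matched_chain(5) by simp
qed

lemma lower_child_width_surplus_le:
  assumes M: "node_of X Z M" and N: "node_of X Y N" and int: "node_int P M \<subseteq> node_int P N"
  shows "width_surplus_le P M N"
proof -
  have M_sides: "fst M \<subseteq> X" "snd M \<subseteq> Z" and N_sides: "fst N \<subseteq> X" "snd N \<subseteq> Y"
    using M N unfolding node_of_def by auto
  have f_image: "f ` fst M = snd M" using node_of_matching_image[OF M disjoint_XZ bij_f f_above] .
  have "fst M \<subseteq> down_set P (snd M)"
  proof
    fix x assume x: "x \<in> fst M"
    then have "x \<in> X" using M_sides by blast
    then have "x \<in> P" "f x \<in> snd M" "x \<le> f x"
      using x layers_subset f_image less_imp_le[OF matched_chain(3)] by auto
    then show "x \<in> down_set P (snd M)" unfolding down_set_def by blast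
  qed
  then have sub: "fst M \<subseteq> fst N"
    by (rule node_int_subset_fst[OF antichain_X M_sides(1) N_sides(1) _ int])
  have fin: "finite (fst N)" "finite (snd N)"
    using N_sides finite_layers finite_subset by blast+
  have "surplus P M \<le> surplus P N" if "card (fst M) = card (fst N)"
  proof (rule surplus_mono)
    have eq: "fst M = fst N" using card_subset_eq[OF fin(1) sub] that by simp
    have h_image: "h ` snd M \<subseteq> snd N"
    proof
      fix z assume "z \<in> h ` snd M"
      then obtain y where y: "y \<in> snd M" "z = h y" by blast
      from y(1) obtain x where x: "x \<in> fst M" "y = f x" unfolding f_image[symmetric] by blast
      then have "x \<in> X" "x \<in> fst N" using M_sides eq by auto
      then show "z \<in> snd N"
        using node_of_neighbour_in_snd[OF N disjoint_XY _ matched_chain(2,5)] x(2) y(2) by simp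
    qed
    have h_inj: "inj_on h (snd M)"
      using inj_on_subset[OF bij_betw_imp_inj_on[OF bij_h] M_sides(2)] .
    have card_eq: "card (snd M) = card (snd N)"
      using node_of_card_eq[OF M disjoint_XZ bij_f f_above] node_of_XY_card_eq[OF N] eq by simp
    have h_le: "\<forall>y\<in>snd M. y \<le> h y" using h_above M_sides(2) less_imp_le by blast
    have "snd N \<subseteq> P" using N_sides layers_subset by blast
    then show "surplus_cond P N k" if "surplus_cond P M k" for k
      using surplus_cond_transfer_snd[OF that eq h_inj h_image h_le _ fin(2) card_eq] by blast
    show "finite (fst M)" using eq fin(1) by simp
    show "snd M \<subseteq> P" using M_sides layers_subset by blast
    show "finite (snd N)" by (rule fin(2))
    show "fst N \<inter> snd N = {}" using N_sides disjoint_XY by blast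
  qed
  then show ?thesis
    unfolding width_surplus_le_def node_width_def using card_mono[OF fin(1) sub] by simp
qed

lemma upper_child_width_surplus_le:
  assumes M: "node_of Z Y M" and N: "node_of X Y N" and int: "node_int P M \<subseteq> node_int P N"
  shows "width_surplus_le P M N"
proof -
  have M_sides: "fst M \<subseteq> Z" "snd M \<subseteq> Y" and N_sides: "fst N \<subseteq> X" "snd N \<subseteq> Y"
    using M N unfolding node_of_def by auto
  have h_image: "h ` fst M = snd M" using node_of_matching_image[OF M disjoint_ZY bij_h h_above] .
  have "snd M \<subseteq> up_set P (fst M)"
  proof
    fix y assume "y \<in> snd M"
    then obtain z where z: "z \<in> fst M" "y = h z" unfolding h_image[symmetric] by blast
    then have "z \<in> Z" using M_sides by blast
    then have "y \<in> P" "z \<le> y" using z(2) layers_subset bij_betw_apply[OF bij_h] h_above by auto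
    then show "y \<in> up_set P (fst M)" using z(1) unfolding up_set_def by blast
  qed
  then have sub: "snd M \<subseteq> snd N"
    by (rule node_int_subset_snd[OF antichain_Y M_sides(2) N_sides(2) _ int])
  have fin: "finite (snd N)" using N_sides finite_layers finite_subset by blast
  have card_M: "card (snd M) = card (fst M)"
    using node_of_card_eq[OF M disjoint_ZY bij_h h_above] .
  have card_N: "card (snd N) = card (fst N)" using node_of_XY_card_eq[OF N] .
  have "surplus P M \<le> surplus P N" if "card (fst M) = card (fst N)"
  proof (rule surplus_mono)
    have eq: "snd M = snd N" using card_subset_eq[OF fin sub] that card_M card_N by simp
    have f_image: "f ` fst N \<subseteq> fst M"
    proof
      fix z assume "z \<in> f ` fst N"
      then obtain x where x: "x \<in> fst N" "z = f x" by blast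
      then have "x \<in> X" using N_sides by blast
      then have "h (f x) \<in> snd M"
        using node_of_neighbour_in_snd[OF N disjoint_XY x(1) matched_chain(2,5)] eq by simp
      then show "z \<in> fst M"
        using node_of_neighbour_in_fst[OF M disjoint_ZY _ matched_chain(1,4)] \<open>x \<in> X\<close> x(2) by simp
    qed
    have f_inj: "inj_on f (fst N)"
      using inj_on_subset[OF bij_betw_imp_inj_on[OF bij_f] N_sides(1)] .
    have f_le: "\<forall>x\<in>fst N. x \<le> f x" using f_above N_sides(1) less_imp_le by blast
    show "surplus_cond P N k" if "surplus_cond P M k" for k
      using surplus_cond_transfer_fst[OF that eq f_inj f_image f_le fin] .
    show "finite (fst M)" using M_sides finite_layers finite_subset by blast
    show "snd M \<subseteq> P" using M_sides layers_subset by blast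
    show "finite (snd N)" by (rule fin)
    show "fst N \<inter> snd N = {}" using N_sides disjoint_XY by blast
  qed
  moreover have "card (fst M) \<le> card (fst N)" using card_mono[OF fin sub] card_M card_N by simp
  ultimately show ?thesis unfolding width_surplus_le_def node_width_def by simp
qed

lemma child_width_surplus_le:
  assumes "node_of X Z M \<or> node_of Z Y M" "node_of X Y N" "node_int P M \<subseteq> node_int P N"
  shows "width_surplus_le P M N"
  using assms lower_child_width_surplus_le upper_child_width_surplus_le by blast

end

lemma node_child_matched_layers:
  assumes fin: "finite P" and reg: "regular_poset P A k" and child: "node_child P A k M N"
  obtains X Z Y f h where "matched_layers P X Z Y f h" "node_of X Y N"
    "node_of X Z M \<or> node_of Z Y M" "node_int P M \<subseteq> node_int P N"
proof -
  obtain t p s where t: "t \<in> {3..k}" and cons: "consecutive P A (t - 1) p s"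
    and pt: "ac_less P (A p) (A t)" and ts: "ac_less P (A t) (A s)"
    and M: "node_of (A p) (A t) M \<or> node_of (A t) (A s) M"
    and N: "node_of (A p) (A s) N" and int: "node_int P M \<subset> node_int P N"
    using child unfolding node_child_def by blast
  have t_Suc: "Suc (t - 1) = t" using t by simp
  have indices: "p \<in> {1..k}" "t \<in> {1..k}" "s \<in> {1..k}"
    using cons t unfolding consecutive_def by auto
  have distinct: "p \<noteq> t" "t \<noteq> s" "p \<noteq> s"
    using pt ts cons unfolding consecutive_def ac_less_def by auto
  have antichain: "antichain P (A i)" and nonempty: "A i \<noteq> {}" if "i \<in> {1..k}" for i
    using reg that unfolding regular_poset_def maximum_antichain_def by blast+
  have disjoint: "A i \<inter> A j = {}" if "i \<in> {1..k}" "j \<in> {1..k}" "i \<noteq> j" for i j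
    using reg that unfolding regular_poset_def by blast
  have "\<forall>t'\<in>{2..k}. \<forall>p' s'. consecutive P A t' p' s' \<longrightarrow> regular_bip (A p') (A s')"
    using reg unfolding regular_poset_def by blast
  moreover have "t \<in> {2..k}" using t by simp
  ultimately have regular: "regular_bip (A p') (A s')" if "consecutive P A t p' s'" for p' s'
    using that by blast
  have "consecutive P A t p t"
    using consecutive_insert_left[of P A "t - 1" p s, unfolded t_Suc]
      cons pt ts antichain indices by blast
  then obtain f where f: "bij_betw f (A p) (A t)" "\<forall>x\<in>A p. x < f x"
    using regular_bip_perfect_matching[OF regular nonempty disjoint] pt distinct indices
    unfolding ac_less_def by blast
  have "consecutive P A t t s"
    using consecutive_insert_right[of P A "t - 1" p s, unfolded t_Suc]
      cons pt ts antichain indices by blast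
  then obtain h where h: "bij_betw h (A t) (A s)" "\<forall>z\<in>A t. z < h z"
    using regular_bip_perfect_matching[OF regular nonempty disjoint] ts distinct indices
    unfolding ac_less_def by blast
  have "matched_layers P (A p) (A t) (A s) f h"
    using fin antichain disjoint indices distinct f h by unfold_locales auto
  then show ?thesis using that N M int by blast
qed

theorem proposition10:
  fixes P :: "'a::order set" and A :: "nat \<Rightarrow> 'a set" and k :: nat
    and M N :: "'a set \<times> 'a set"
  assumes "finite P"
    and "regular_poset P A k"
    and "node_descendant P A k M N"
  shows "node_width M \<le> node_width N \<and>
         (node_width M = node_width N \<longrightarrow> surplus P M \<le> surplus P N)"
proof -
  have child_le: "width_surplus_le P L L'" if "node_child P A k L L'" for L L'
    using node_child_matched_layers[OF assms(1,2) that] matched_layers.child_width_surplus_le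
    by metis
  have "width_surplus_le P M N"
    using assms(3) unfolding node_descendant_def
    by (induction rule: tranclp_induct) (auto intro: child_le width_surplus_le_trans)
  then show ?thesis unfolding width_surplus_le_def .
qed

end
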